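(* Let $s,d,k\ge1$ and let $I=(G,D,\mathsf{cost},\mathsf{supply},\mathsf{demand})$ be an $(s,d)$-decent instance of Min Weight Generalized Domination with minimum solution cost $\mathsf{OPT}$. Let $V_0,\dots,V_{k-1}\subseteq V(G)$ be such that the sets $N_G[V_0],\dots,N_G[V_{k-1}]$ are pairwise disjoint, and for each $j$ let $I_j=\mathsf{Clear}(I;V_j)$. Then (1) for every $j\in\{0,\dots,k-1\}$, $I_j$ is $(s,d)$-decent and has a solution of cost at most $\mathsf{OPT}$; and (2) there exists $j\in\{0,\dots,k-1\}$ such that every solution to $I_j$ has cost at least $(1-\frac1k)\mathsf{OPT}$.
   Context: An instance of Min Weight Generalized Domination consists of a loopless multigraph $G$ and for every vertex $u$: a finite domain $D_u$, $\mathsf{cost}_u\colon D_u\to\mathbb{R}_{\ge0}\cup\{+\infty\}$, and $\mathsf{supply}_u,\mathsf{demand}_u\colon D_u\to 2^{\delta(u)}$ ($\delta(u)$ = edges incident to $u$), with some $s_u\in D_u$ having $\mathsf{supply}_u(s_u)=\delta(u)$ and finite cost. A solution is $\phi$ with $\phi(u)\in D_u$ such that for every edge $e$ with endpoints $u,v$, $e\in\mathsf{demand}_u(\phi(u))\Rightarrow e\in\mathsf{supply}_v(\phi(v))$ and $e\in\mathsf{demand}_v(\phi(v))\Rightarrow e\in\mathsf{supply}_u(\phi(u))$; cost $\sum_u\mathsf{cost}_u(\phi(u))$. A vertex is $(s,d)$-meager if $|\delta(u)|\le s$ and $|D_u|\le d$; state-monotonous if for all ordered $x_1,x_2\in D_u$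 there is $x\in D_u$ with $\mathsf{cost}_u(x)\le\mathsf{cost}_u(x_1)+\mathsf{cost}_u(x_2)$, $\mathsf{supply}_u(x)=\mathsf{supply}_u(x_1)\cup\mathsf{supply}_u(x_2)$, $\mathsf{demand}_u(x)\subseteq\mathsf{demand}_u(x_1)$. The instance is $(s,d)$-decent if all vertices are $(s,d)$-meager and state-monotonous. For $A\subseteq V(G)$, $N_G[A]$ is the closed neighborhood of $A$. $\mathsf{Clear}(I;A)$ is obtained from $I$ by deleting all edges with both endpoints in $A$ (also from all supply and demand sets) and then setting $\mathsf{demand}_u(x)=\emptyset$ for every $u\in A$ and every $x\in D_u$. *)

theory Defs
  imports Main "HOL-Library.Extended_Nonnegative_Real"
begin

text \<open>The multigraph has vertex set
  verts, edge set edges, and each edge e has the set of its endpoints ends e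
  (exactly two distinct vertices, so the multigraph is loopless; parallel edges are
  distinct elements of edges).\<close>

record ('v, 'e, 's) gd_inst =
  verts  :: "'v set"
  edges  :: "'e set"
  ends   :: "'e \<Rightarrow> 'v set"
  Dom    :: "'v \<Rightarrow> 's set"
  cost   :: "'v \<Rightarrow> 's \<Rightarrow> ennreal"
  supplies :: "'v \<Rightarrow> 's \<Rightarrow> 'e set"
  demands :: "'v \<Rightarrow> 's \<Rightarrow> 'e set"

definition delta :: "('v, 'e, 's) gd_inst \<Rightarrow> 'v \<Rightarrow> 'e set" where
  "delta I u = {e \<in> edges I. u \<in> ends I e}"

definition gd_instance :: "('v, 'e, 's) gd_inst \<Rightarrow> bool" where
  "gd_instance I \<longleftrightarrow>
     finite (verts I) \<and> finite (edges I) \<and>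
     (\<forall>e\<in>edges I. ends I e \<subseteq> verts I \<and> card (ends I e) = 2) \<and>
     (\<forall>u\<in>verts I. finite (Dom I u) \<and>
        (\<forall>x\<in>Dom I u. supplies I u x \<subseteq> delta I u \<and> demands I u x \<subseteq> delta I u) \<and>
        (\<exists>s\<in>Dom I u. supplies I u s = delta I u \<and> cost I u s < \<infinity>))"

definition is_solution :: "('v, 'e, 's) gd_inst \<Rightarrow> ('v \<Rightarrow> 's) \<Rightarrow> bool" where
  "is_solution I \<phi> \<longleftrightarrow>
     (\<forall>u\<in>verts I. \<phi> u \<in> Dom I u) \<and>
     (\<forall>e\<in>edges I. \<forall>u v. ends I e = {u, v} \<longrightarrow>
        (e \<in> demands I u (\<phi> u) \<longrightarrow> e \<in> supplies I v (\<phi> v)))"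

definition sol_cost :: "('v, 'e, 's) gd_inst \<Rightarrow> ('v \<Rightarrow> 's) \<Rightarrow> ennreal" where
  "sol_cost I \<phi> = (\<Sum>u\<in>verts I. cost I u (\<phi> u))"

definition OPT :: "('v, 'e, 's) gd_inst \<Rightarrow> ennreal" where
  "OPT I = Inf {sol_cost I \<phi> | \<phi>. is_solution I \<phi>}"

definition meager :: "nat \<Rightarrow> nat \<Rightarrow> ('v, 'e, 's) gd_inst \<Rightarrow> 'v \<Rightarrow> bool" where
  "meager s d I u \<longleftrightarrow> card (delta I u) \<le> s \<and> card (Dom I u) \<le> d"

definition state_monotonous :: "('v, 'e, 's) gd_inst \<Rightarrow> 'v \<Rightarrow> bool" where
  "state_monotonous I u \<longleftrightarrow>
     (\<forall>x1\<in>Dom I u. \<forall>x2\<in>Dom I u. \<exists>x\<in>Dom I u.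
        cost I u x \<le> cost I u x1 + cost I u x2 \<and>
        supplies I u x = supplies I u x1 \<union> supplies I u x2 \<and>
        demands I u x \<subseteq> demands I u x1)"

definition decent :: "nat \<Rightarrow> nat \<Rightarrow> ('v, 'e, 's) gd_inst \<Rightarrow> bool" where
  "decent s d I \<longleftrightarrow> (\<forall>u\<in>verts I. meager s d I u \<and> state_monotonous I u)"

definition closed_nbhd :: "('v, 'e, 's) gd_inst \<Rightarrow> 'v set \<Rightarrow> 'v set" where
  "closed_nbhd I A = A \<union> {v \<in> verts I. \<exists>e\<in>edges I. \<exists>a\<in>A. ends I e = {a, v}}"

definition Clear :: "('v, 'e, 's) gd_inst \<Rightarrow> 'v set \<Rightarrow> ('v, 'e, 's) gd_inst" where
  "Clear I A =
     (let E' = {e \<in> edges I. \<not> ends I e \<subseteq> A} in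
      I\<lparr> edges := E',
         supplies := (\<lambda>u x. supplies I u x \<inter> E'),
         demands := (\<lambda>u x. if u \<in> A then {} else demands I u x \<inter> E') \<rparr>)"

end

theory Submission imports Defs begin

text \<open>An optimal solution \<phi> of I spends at most OPT on the disjoint neighbourhoods N[V_j], so
  some N[V_j] carries at most OPT/k of its cost. Clearing only removes constraints, so \<phi> stays a
  solution of every I_j. Conversely, any solution \<psi> of I_j can be repaired into a solution of I by
  merging, via state-monotonicity, the states of \<phi> into \<psi> on N[V_j]: inside V_j the demands of \<phi>
  are restored, and on N[V_j] the supplies of \<phi> are added. This costs at most the cost of \<phi> on
  N[V_j], hence OPT \<le> cost \<psi> + OPT/k for the lightest j.\<close>

lemma Clear_simps:
  "verts (Clear I A) = verts I" "ends (Clear I A) = ends I" "Dom (Clear I A) = Dom I"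
  "cost (Clear I A) = cost I"
  "edges (Clear I A) = {e \<in> edges I. \<not> ends I e \<subseteq> A}"
  "supplies (Clear I A) u x = supplies I u x \<inter> {e \<in> edges I. \<not> ends I e \<subseteq> A}"
  "demands (Clear I A) u x =
     (if u \<in> A then {} else demands I u x \<inter> {e \<in> edges I. \<not> ends I e \<subseteq> A})"
  by (simp_all add: Clear_def Let_def)

lemma delta_Clear: "delta (Clear I A) u = delta I u \<inter> {e \<in> edges I. \<not> ends I e \<subseteq> A}"
  by (auto simp: delta_def Clear_simps)

lemma sol_cost_Clear: "sol_cost (Clear I A) \<phi> = sol_cost I \<phi>"
  by (simp add: sol_cost_def Clear_simps)

lemma is_solution_Clear: "is_solution I \<phi> \<Longrightarrow> is_solution (Clear I A) \<phi>"
  unfolding is_solution_def Clear_simps by auto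

lemma gd_instance_Clear: "gd_instance I \<Longrightarrow> gd_instance (Clear I A)"
  unfolding gd_instance_def Clear_simps delta_Clear by (auto 0 4)

lemma meager_Clear:
  assumes "finite (delta I u)" "meager s d I u"
  shows "meager s d (Clear I A) u"
proof -
  have "card (delta (Clear I A) u) \<le> card (delta I u)"
    unfolding delta_Clear using assms(1) by (intro card_mono) auto
  then show ?thesis using assms(2) by (simp add: meager_def Clear_simps)
qed

lemma state_monotonous_Clear:
  assumes "state_monotonous I u"
  shows "state_monotonous (Clear I A) u"
  unfolding state_monotonous_def Clear_simps
proof (intro ballI, goal_cases)
  case (1 x1 x2)
  then obtain x where "x \<in> Dom I u" "cost I u x \<le> cost I u x1 + cost I u x2"
      "supplies I u x = supplies I u x1 \<union> supplies I u x2" "demands I u x \<subseteq> demands I u x1"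
    using assms unfolding state_monotonous_def by blast
  then show ?case by (intro bexI[of _ x]) auto
qed

lemma decent_Clear:
  assumes "gd_instance I" "decent s d I"
  shows "decent s d (Clear I A)"
proof -
  have "finite (delta I u)" for u
    using assms(1) unfolding gd_instance_def delta_def by auto
  then show ?thesis
    using assms(2) meager_Clear state_monotonous_Clear by (fastforce simp: decent_def Clear_simps)
qed

lemma endpoint_in_verts:
  "gd_instance I \<Longrightarrow> e \<in> edges I \<Longrightarrow> ends I e = {u, v} \<Longrightarrow> v \<in> verts I"
  unfolding gd_instance_def by blast

lemma closed_nbhd_subset_verts: "A \<subseteq> verts I \<Longrightarrow> closed_nbhd I A \<subseteq> verts I"
  unfolding closed_nbhd_def by auto

lemma full_supply_solution:
  assumes "gd_instance I"
  obtains \<phi> where "is_solution I \<phi>" "sol_cost I \<phi> < \<infinity>"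
proof -
  define \<phi> where "\<phi> u = (SOME x. x \<in> Dom I u \<and> supplies I u x = delta I u \<and> cost I u x < \<infinity>)"
    for u
  have \<phi>: "\<phi> u \<in> Dom I u \<and> supplies I u (\<phi> u) = delta I u \<and> cost I u (\<phi> u) < \<infinity>"
    if "u \<in> verts I" for u
    unfolding \<phi>_def by (rule someI_ex) (use assms that in \<open>auto simp: gd_instance_def\<close>)
  have "is_solution I \<phi>"
    unfolding is_solution_def
    using \<phi> endpoint_in_verts[OF assms] by (auto simp: delta_def)
  moreover have "sol_cost I \<phi> < \<infinity>"
    unfolding sol_cost_def using assms \<phi> by (simp add: gd_instance_def)
  ultimately show thesis by (rule that)
qed

lemma finite_solution_costs:
  assumes "gd_instance I"
  shows "finite {sol_cost I \<phi> | \<phi>. is_solution I \<phi>}"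
proof (rule finite_subset)
  show "{sol_cost I \<phi> | \<phi>. is_solution I \<phi>}
      \<subseteq> (\<lambda>f. \<Sum>u\<in>verts I. cost I u (f u)) ` PiE (verts I) (Dom I)"
  proof clarify
    fix \<phi> assume "is_solution I \<phi>"
    then have "restrict \<phi> (verts I) \<in> PiE (verts I) (Dom I)" by (auto simp: is_solution_def)
    moreover have "sol_cost I \<phi> = (\<Sum>u\<in>verts I. cost I u (restrict \<phi> (verts I) u))"
      by (simp add: sol_cost_def)
    ultimately show "sol_cost I \<phi> \<in> (\<lambda>f. \<Sum>u\<in>verts I. cost I u (f u)) ` PiE (verts I) (Dom I)"
      by blast
  qed
  show "finite ((\<lambda>f. \<Sum>u\<in>verts I. cost I u (f u)) ` PiE (verts I) (Dom I))"
    using assms by (auto simp: gd_instance_def intro!: finite_PiE)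
qed

lemma OPT_attained:
  assumes "gd_instance I"
  obtains \<phi> where "is_solution I \<phi>" "sol_cost I \<phi> = OPT I"
proof -
  let ?S = "{sol_cost I \<phi> | \<phi>. is_solution I \<phi>}"
  obtain \<phi>0 where "is_solution I \<phi>0" using full_supply_solution[OF assms] .
  then have ne: "?S \<noteq> {}" by blast
  have "OPT I = Min ?S"
    unfolding OPT_def using finite_solution_costs[OF assms] ne by (rule cInf_eq_Min)
  then have "OPT I \<in> ?S" using Min_in[OF finite_solution_costs[OF assms] ne] by simp
  then show thesis using that by fastforce
qed

lemma OPT_finite:
  assumes "gd_instance I"
  shows "OPT I < \<infinity>"
proof -
  obtain \<phi> where "is_solution I \<phi>" "sol_cost I \<phi> < \<infinity>" using full_supply_solution[OF assms] .
  then show ?thesis unfolding OPT_def by (blast intro: Inf_lower le_less_trans)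
qed

lemma OPT_le_sol_cost: "is_solution I \<phi> \<Longrightarrow> OPT I \<le> sol_cost I \<phi>"
  unfolding OPT_def by (blast intro: Inf_lower)

definition merge_state :: "('v, 'e, 's) gd_inst \<Rightarrow> 'v \<Rightarrow> 's \<Rightarrow> 's \<Rightarrow> 's" where
  "merge_state I u x1 x2 = (SOME x. x \<in> Dom I u \<and> cost I u x \<le> cost I u x1 + cost I u x2 \<and>
     supplies I u x = supplies I u x1 \<union> supplies I u x2 \<and> demands I u x \<subseteq> demands I u x1)"

lemma merge_state:
  assumes "state_monotonous I u" "x1 \<in> Dom I u" "x2 \<in> Dom I u"
  shows "merge_state I u x1 x2 \<in> Dom I u"
    and "cost I u (merge_state I u x1 x2) \<le> cost I u x1 + cost I u x2"
    and "supplies I u (merge_state I u x1 x2) = supplies I u x1 \<union> supplies I u x2"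
    and "demands I u (merge_state I u x1 x2) \<subseteq> demands I u x1"
proof -
  have "\<exists>x. x \<in> Dom I u \<and> cost I u x \<le> cost I u x1 + cost I u x2 \<and>
      supplies I u x = supplies I u x1 \<union> supplies I u x2 \<and> demands I u x \<subseteq> demands I u x1"
    using assms unfolding state_monotonous_def by blast
  from someI_ex[OF this] show "merge_state I u x1 x2 \<in> Dom I u"
    and "cost I u (merge_state I u x1 x2) \<le> cost I u x1 + cost I u x2"
    and "supplies I u (merge_state I u x1 x2) = supplies I u x1 \<union> supplies I u x2"
    and "demands I u (merge_state I u x1 x2) \<subseteq> demands I u x1"
    unfolding merge_state_def by blast+
qed

text \<open>Repairing at u the state y of a solution of Clear I A with the state x of a solution
  of I: inside A the demands are taken from x, since Clear erased those of y; on the rest of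
  closed_nbhd I A the demands of y are kept, and the supplies of x are added.\<close>

definition patch_state :: "('v, 'e, 's) gd_inst \<Rightarrow> 'v set \<Rightarrow> 'v \<Rightarrow> 's \<Rightarrow> 's \<Rightarrow> 's" where
  "patch_state I A u x y =
     (if u \<in> A then merge_state I u x y
      else if u \<in> closed_nbhd I A then merge_state I u y x
      else y)"

definition patch :: "('v, 'e, 's) gd_inst \<Rightarrow> 'v set \<Rightarrow> ('v \<Rightarrow> 's) \<Rightarrow> ('v \<Rightarrow> 's) \<Rightarrow> 'v \<Rightarrow> 's" where
  "patch I A \<phi> \<psi> u = patch_state I A u (\<phi> u) (\<psi> u)"

context
  fixes I :: "('v, 'e, 's) gd_inst" and A :: "'v set" and u :: 'v and x y :: 's
  assumes mono: "state_monotonous I u" and x: "x \<in> Dom I u" and y: "y \<in> Dom I u"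
begin

lemma patch_state_in_Dom: "patch_state I A u x y \<in> Dom I u"
  using merge_state(1)[OF mono x y] merge_state(1)[OF mono y x] y by (simp add: patch_state_def)

lemma supplies_patch_state: "supplies I u y \<subseteq> supplies I u (patch_state I A u x y)"
  using merge_state(3)[OF mono x y] merge_state(3)[OF mono y x] by (simp add: patch_state_def)

lemma supplies_patch_state_nbhd:
  "u \<in> closed_nbhd I A \<Longrightarrow> supplies I u x \<subseteq> supplies I u (patch_state I A u x y)"
  using merge_state(3)[OF mono x y] merge_state(3)[OF mono y x] by (simp add: patch_state_def)

lemma demands_patch_state_inside:
  "u \<in> A \<Longrightarrow> demands I u (patch_state I A u x y) \<subseteq> demands I u x"
  using merge_state(4)[OF mono x y] by (simp add: patch_state_def)

lemma demands_patch_state_outside: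
  "u \<notin> A \<Longrightarrow> demands I u (patch_state I A u x y) \<subseteq> demands I u y"
  using merge_state(4)[OF mono y x] by (simp add: patch_state_def)

lemma cost_patch_state_le:
  "cost I u (patch_state I A u x y)
     \<le> cost I u y + (if u \<in> closed_nbhd I A then cost I u x else 0)"
  using merge_state(2)[OF mono x y] merge_state(2)[OF mono y x]
  by (auto simp: patch_state_def closed_nbhd_def add.commute)

end

context
  fixes I :: "('v, 'e, 's) gd_inst" and A :: "'v set" and \<phi> \<psi> :: "'v \<Rightarrow> 's"
  assumes gd: "gd_instance I" and mono: "\<forall>u\<in>verts I. state_monotonous I u"
    and A: "A \<subseteq> verts I"
    and \<phi>: "is_solution I \<phi>" and \<psi>: "is_solution (Clear I A) \<psi>"
begin

lemma patch_local_facts: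
  assumes "u \<in> verts I"
  shows "state_monotonous I u" "\<phi> u \<in> Dom I u" "\<psi> u \<in> Dom I u"
  using assms mono \<phi> \<psi> by (auto simp: is_solution_def Clear_simps)

lemma is_solution_patch: "is_solution I (patch I A \<phi> \<psi>)"
  unfolding is_solution_def patch_def
proof (intro conjI ballI allI impI)
  fix u assume "u \<in> verts I"
  from patch_state_in_Dom[OF patch_local_facts[OF this]]
  show "patch_state I A u (\<phi> u) (\<psi> u) \<in> Dom I u" .
next
  fix e u v
  assume e: "e \<in> edges I" "ends I e = {u, v}"
    and dem: "e \<in> demands I u (patch_state I A u (\<phi> u) (\<psi> u))"
  have v: "v \<in> verts I" using endpoint_in_verts[OF gd e] .
  have u: "u \<in> verts I"
    using endpoint_in_verts[OF gd e(1), of v u] e(2) by (simp add: insert_commute)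
  show "e \<in> supplies I v (patch_state I A v (\<phi> v) (\<psi> v))"
  proof (cases "u \<in> A")
    case True
    then have "e \<in> demands I u (\<phi> u)"
      using dem demands_patch_state_inside[OF patch_local_facts[OF u]] by blast
    then have "e \<in> supplies I v (\<phi> v)" using \<phi> e unfolding is_solution_def by blast
    moreover have "v \<in> closed_nbhd I A" using True e v unfolding closed_nbhd_def by blast
    ultimately show ?thesis using supplies_patch_state_nbhd[OF patch_local_facts[OF v]] by blast
  next
    case False
    then have "e \<in> demands I u (\<psi> u)"
      using dem demands_patch_state_outside[OF patch_local_facts[OF u]] by blast
    then have "e \<in> demands (Clear I A) u (\<psi> u)" using False e by (simp add: Clear_simps)
    then have "e \<in> supplies I v (\<psi> v)"
      using \<psi> e False unfolding is_solution_def Clear_simps by blast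
    then show ?thesis using supplies_patch_state[OF patch_local_facts[OF v]] by blast
  qed
qed

lemma sol_cost_patch_le:
  "sol_cost I (patch I A \<phi> \<psi>)
     \<le> sol_cost (Clear I A) \<psi> + (\<Sum>u\<in>closed_nbhd I A. cost I u (\<phi> u))"
proof -
  let ?N = "closed_nbhd I A"
  have "sol_cost I (patch I A \<phi> \<psi>)
      \<le> (\<Sum>u\<in>verts I. cost I u (\<psi> u) + (if u \<in> ?N then cost I u (\<phi> u) else 0))"
    unfolding sol_cost_def patch_def by (intro sum_mono cost_patch_state_le[OF patch_local_facts])
  also have "\<dots> = sol_cost (Clear I A) \<psi> + (\<Sum>u\<in>?N. cost I u (\<phi> u))"
    using closed_nbhd_subset_verts[OF A] gd
    by (simp add: sum.distrib sol_cost_def Clear_simps sum.If_cases Int_absorb1 gd_instance_def)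
  finally show ?thesis .
qed

lemma OPT_le_sol_cost_Clear:
  "OPT I \<le> sol_cost (Clear I A) \<psi> + (\<Sum>u\<in>closed_nbhd I A. cost I u (\<phi> u))"
  using OPT_le_sol_cost[OF is_solution_patch] sol_cost_patch_le by (rule order.trans)

end

lemma exists_light_part:
  fixes f :: "'a \<Rightarrow> 'b :: linordered_nonzero_semiring" and P :: "nat \<Rightarrow> 'a set"
  assumes "finite S" "k \<ge> 1" "\<forall>u\<in>S. f u \<ge> 0" "\<forall>j<k. P j \<subseteq> S"
    and "\<forall>i<k. \<forall>j<k. i \<noteq> j \<longrightarrow> P i \<inter> P j = {}"
  shows "\<exists>j<k. of_nat k * sum f (P j) \<le> sum f S"
proof -
  define c where "c j = sum f (P j)" for j
  have fin: "finite (c ` {..<k})" by simp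
  have ne: "c ` {..<k} \<noteq> {}" using assms(2) by (simp add: lessThan_empty_iff)
  obtain j where j: "j < k" "c j = Min (c ` {..<k})"
    using Min_in[OF fin ne] by (metis imageE lessThan_iff)
  have "of_nat k * c j = (\<Sum>i<k. c j)" by simp
  also have "\<dots> \<le> (\<Sum>i<k. c i)" using j(2) Min_le[OF fin] by (intro sum_mono) simp
  also have "\<dots> = sum f (\<Union>i<k. P i)"
    unfolding c_def using assms(5) finite_subset[OF _ assms(1)] assms(4)
    by (intro sum.UNION_disjoint[symmetric]) simp_all
  also have "\<dots> \<le> sum f S" using assms(1,3,4) by (intro sum_mono2) auto
  finally show ?thesis using j(1) unfolding c_def by blast
qed

lemma ennreal_drop_light_summand:
  fixes q p c :: ennreal
  assumes "q < \<infinity>" "q \<le> p + c" "of_nat k * c \<le> q" "k \<ge> 1"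
  shows "ennreal (1 - 1 / real k) * q \<le> p"
proof (cases "p = top")
  case False
  have "c \<le> of_nat k * c" using assms(4) mult_right_mono[of 1 "of_nat k" c] by simp
  then have "c < top" using assms(1,3) by simp
  then obtain c' where c: "c = ennreal c'" "c' \<ge> 0" using less_top_ennreal by blast
  obtain q' where q: "q = ennreal q'" "q' \<ge> 0" using assms(1) less_top_ennreal by auto
  obtain p' where p: "p = ennreal p'" "p' \<ge> 0" using False ennreal_cases[of p] by blast
  have "q' \<le> p' + c'" using assms(2) p q c by (simp flip: ennreal_plus)
  moreover have "real k * c' \<le> q'"
    using assms(3) q c by (simp add: ennreal_of_nat_eq_real_of_nat flip: ennreal_mult)
  ultimately have "q' * real k \<le> q' + p' * real k"
    using mult_right_mono[of q' "p' + c'" "real k"] by (simp add: algebra_simps)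
  then have "(1 - 1 / real k) * q' \<le> p'" using assms(4) by (simp add: field_simps)
  then show ?thesis using assms(4) p q by (simp flip: ennreal_mult)
qed simp

theorem lemma4p3:
  fixes I :: "('v, 'e, 's) gd_inst" and s d k :: nat and Vs :: "nat \<Rightarrow> 'v set"
  assumes "s \<ge> 1" "d \<ge> 1" "k \<ge> 1"
    and "gd_instance I" and "decent s d I"
    and "\<forall>j<k. Vs j \<subseteq> verts I"
    and "\<forall>i<k. \<forall>j<k. i \<noteq> j \<longrightarrow> closed_nbhd I (Vs i) \<inter> closed_nbhd I (Vs j) = {}"
  shows "(\<forall>j<k. gd_instance (Clear I (Vs j)) \<and> decent s d (Clear I (Vs j)) \<and>
            (\<exists>\<phi>. is_solution (Clear I (Vs j)) \<phi> \<and> sol_cost (Clear I (Vs j)) \<phi> \<le> OPT I))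
       \<and> (\<exists>j<k. \<forall>\<phi>. is_solution (Clear I (Vs j)) \<phi> \<longrightarrow>
            ennreal (1 - 1 / real k) * OPT I \<le> sol_cost (Clear I (Vs j)) \<phi>)"
proof -
  obtain \<phi> where \<phi>: "is_solution I \<phi>" "sol_cost I \<phi> = OPT I" using OPT_attained[OF assms(4)] .
  have mono: "\<forall>u\<in>verts I. state_monotonous I u" using assms(5) by (simp add: decent_def)
  have "\<exists>j<k. of_nat k * (\<Sum>u\<in>closed_nbhd I (Vs j). cost I u (\<phi> u)) \<le> OPT I"
    unfolding \<phi>(2)[symmetric] sol_cost_def
    using assms(3,4,7) assms(6)[rule_format, THEN closed_nbhd_subset_verts]
    by (intro exists_light_part) (auto simp: gd_instance_def)
  then obtain j where j: "j < k"
    and light: "of_nat k * (\<Sum>u\<in>closed_nbhd I (Vs j). cost I u (\<phi> u)) \<le> OPT I"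
    by blast
  have "ennreal (1 - 1 / real k) * OPT I \<le> sol_cost (Clear I (Vs j)) \<psi>"
    if "is_solution (Clear I (Vs j)) \<psi>" for \<psi>
    using ennreal_drop_light_summand[OF OPT_finite[OF assms(4)] _ light assms(3)]
      OPT_le_sol_cost_Clear[OF assms(4) mono _ \<phi>(1) that] assms(6) j by blast
  moreover have "gd_instance (Clear I (Vs i))" "decent s d (Clear I (Vs i))"
    "is_solution (Clear I (Vs i)) \<phi>" "sol_cost (Clear I (Vs i)) \<phi> \<le> OPT I" for i
    using gd_instance_Clear[OF assms(4)] decent_Clear[OF assms(4,5)] is_solution_Clear[OF \<phi>(1)]
    by (simp_all add: sol_cost_Clear \<phi>(2))
  ultimately show ?thesis using j by blast
qed

end
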